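(* Let $\{S(u,v),S_1(u_1,v_1)\}$ be Bertrand pair surfaces with $\{x,x_1\}$ a Bertrand D-pair ($x$ on $S$, $x_1$ on $S_1$). Let $(k_g)_1,(k_g)_2$ be the geodesic curvatures of the parametric curves of $S(u,v)$ and $(k_{g_1})_1,(k_{g_1})_2$ those of the parametric curves of $S_1(u_1,v_1)$. Let $\sigma$ be the angle between $x(s)$ and the parametric curve $v=\text{const}$ of $S$, and $\sigma_1$ the angle between $x_1(s_1)$ and the parametric curve $v_1=\text{const}$ of $S_1$. Then $$\Big(\tfrac{d\sigma}{ds} + (k_g)_1 \cos\sigma + (k_g)_2\sin\sigma\Big) - \Big(\tfrac{d\sigma_1}{ds_1} + (k_{g_1})_1\cos\sigma_1 + (k_{g_1})_2\sin\sigma_1\Big) = \lambda\Big[\Big(\tfrac{d\sigma}{ds} + (k_g)_1\cos\sigma + (k_g)_2\sin\sigma\Big)\Big(\tfrac{d\sigma_1}{ds_1} + (k_{g_1})_1\cos\sigma_1 + (k_{g_1})_2\sin\sigma_1\Big) - \tau_g\tau_{g_1}\Big].$$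
   Context: For a unit-speed curve $x(s)$ on an oriented surface $S\subset\mathbb{E}^3$, the Darboux frame is $\{T,g,n\}$ ($T$ unit tangent, $n$ unit surface normal along the curve, $g=n\times T$), with $\dot T = k_g g + k_n n$, $\dot g = -k_g T + \tau_g n$, $\dot n = -k_n T - \tau_g g$; $k_g,k_n,\tau_g$ are the geodesic curvature, normal curvature and geodesic torsion. For $x_1(s_1)$ on $S_1$ the analogous objects carry subscript $1$. $\{x,x_1\}$ is a Bertrand D-pair if there is a correspondence of points such that at corresponding points $g$ coincides with $g_1$; then $\{S,S_1\}$ are called Bertrand pair surfaces, and $x(s)=x_1(s_1)+\lambda g_1(s_1)$ at corresponding points with $\lambda$ a nonzero constant. *)

theory Defs
  imports "HOL-Analysis.Analysis"
begin

unbundle cross3_syntax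

definition Xu :: "(real * real \<Rightarrow> real^3) \<Rightarrow> real * real \<Rightarrow> real^3" where
  "Xu X p = vector_derivative (\<lambda>t. X (t, snd p)) (at (fst p))"

definition Xv :: "(real * real \<Rightarrow> real^3) \<Rightarrow> real * real \<Rightarrow> real^3" where
  "Xv X p = vector_derivative (\<lambda>t. X (fst p, t)) (at (snd p))"

definition unit_normal :: "(real * real \<Rightarrow> real^3) \<Rightarrow> real * real \<Rightarrow> real^3" where
  "unit_normal X p = (1 / norm (Xu X p \<times> Xv X p)) *\<^sub>R (Xu X p \<times> Xv X p)"

definition e1 :: "(real * real \<Rightarrow> real^3) \<Rightarrow> real * real \<Rightarrow> real^3" where
  "e1 X p = (1 / norm (Xu X p)) *\<^sub>R Xu X p"

definition e2 :: "(real * real \<Rightarrow> real^3) \<Rightarrow> real * real \<Rightarrow> real^3" where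
  "e2 X p = (1 / norm (Xv X p)) *\<^sub>R Xv X p"

definition regular_patch :: "(real * real \<Rightarrow> real^3) \<Rightarrow> (real * real) set \<Rightarrow> bool" where
  "regular_patch X U \<longleftrightarrow> open U \<and>
     (\<forall>p\<in>U. X differentiable (at p) \<and> Xu X differentiable (at p) \<and>
             Xv X differentiable (at p) \<and> Xu X p \<times> Xv X p \<noteq> 0)"

text \<open>The parametric curves are orthogonal (F = 0), the setting of Liouville's formula.\<close>
definition orthogonal_patch :: "(real * real \<Rightarrow> real^3) \<Rightarrow> (real * real) set \<Rightarrow> bool" where
  "orthogonal_patch X U \<longleftrightarrow> (\<forall>p\<in>U. Xu X p \<bullet> Xv X p = 0)"

definition tangent :: "(real \<Rightarrow> real^3) \<Rightarrow> real \<Rightarrow> real^3" where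
  "tangent c t = vector_derivative c (at t)"

text \<open>Geodesic curvature of a (not necessarily unit-speed) curve c lying on a surface with
  unit normal N along it: k_g = c'' . (N x c') / |c'|^3. For a unit-speed curve this is
  T' . g with g = N x T.\<close>
definition geodesic_curvature :: "(real \<Rightarrow> real^3) \<Rightarrow> (real \<Rightarrow> real^3) \<Rightarrow> real \<Rightarrow> real" where
  "geodesic_curvature c N t =
     (vector_derivative (tangent c) (at t) \<bullet> (N t \<times> tangent c t)) / norm (tangent c t) ^ 3"

definition darboux_g :: "(real \<Rightarrow> real^3) \<Rightarrow> (real \<Rightarrow> real^3) \<Rightarrow> real \<Rightarrow> real^3" where
  "darboux_g c N s = N s \<times> tangent c s"

text \<open>Geodesic torsion tau_g = g' . n (from g' = -k_g T + tau_g n).\<close>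
definition geodesic_torsion :: "(real \<Rightarrow> real^3) \<Rightarrow> (real \<Rightarrow> real^3) \<Rightarrow> real \<Rightarrow> real" where
  "geodesic_torsion c N s = vector_derivative (darboux_g c N) (at s) \<bullet> N s"

definition kg_ucurve :: "(real * real \<Rightarrow> real^3) \<Rightarrow> real * real \<Rightarrow> real" where
  "kg_ucurve X p = geodesic_curvature (\<lambda>t. X (t, snd p)) (\<lambda>t. unit_normal X (t, snd p)) (fst p)"

definition kg_vcurve :: "(real * real \<Rightarrow> real^3) \<Rightarrow> real * real \<Rightarrow> real" where
  "kg_vcurve X p = geodesic_curvature (\<lambda>t. X (fst p, t)) (\<lambda>t. unit_normal X (fst p, t)) (snd p)"

definition curve_on_patch ::
  "(real * real \<Rightarrow> real^3) \<Rightarrow> (real * real) set \<Rightarrow> (real \<Rightarrow> real * real) \<Rightarrow> real set \<Rightarrow>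
   (real \<Rightarrow> real^3) \<Rightarrow> (real \<Rightarrow> real) \<Rightarrow> bool" where
  "curve_on_patch X U \<alpha> I x \<sigma> \<longleftrightarrow> open I \<and>
     (\<forall>s\<in>I. \<alpha> s \<in> U \<and> \<alpha> differentiable (at s) \<and> x s = X (\<alpha> s) \<and>
        x differentiable (at s) \<and> norm (tangent x s) = 1 \<and> tangent x differentiable (at s) \<and>
        \<sigma> differentiable (at s) \<and>
        tangent x s = cos (\<sigma> s) *\<^sub>R e1 X (\<alpha> s) + sin (\<sigma> s) *\<^sub>R e2 X (\<alpha> s))"

definition bertrand_D_pair ::
  "(real \<Rightarrow> real^3) \<Rightarrow> (real \<Rightarrow> real^3) \<Rightarrow> real set \<Rightarrow>
   (real \<Rightarrow> real^3) \<Rightarrow> (real \<Rightarrow> real^3) \<Rightarrow> real set \<Rightarrow> (real \<Rightarrow> real) \<Rightarrow> real \<Rightarrow> bool" where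
  "bertrand_D_pair x n I x1 n1 I1 \<phi> lam \<longleftrightarrow>
     bij_betw \<phi> I I1 \<and> lam \<noteq> 0 \<and>
     (\<forall>s\<in>I. \<phi> differentiable (at s) \<and>
        darboux_g x n s = darboux_g x1 n1 (\<phi> s) \<and>
        x s = x1 (\<phi> s) + lam *\<^sub>R darboux_g x1 n1 (\<phi> s))"

end

theory Submission
  imports Defs
begin

text \<open>By Liouville's formula for an orthogonal parametrization, each bracket in the statement
  is the geodesic curvature of the curve: writing \<open>T = cos \<sigma> e1 + sin \<sigma> e2\<close> and
  \<open>g = n \<times> T\<close>, one has \<open>T' \<bullet> g = \<sigma>' + e1' \<bullet> e2\<close>, and \<open>e1' \<bullet> e2 = (k\<^sub>g)\<^sub>1 cos \<sigma> + (k\<^sub>g)\<^sub>2 sin \<sigma>\<close>.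
  So it suffices to show \<open>k - k1 = \<lambda> (k k1 - \<tau> \<tau>1)\<close> for the geodesic curvatures and torsions.
  Differentiating \<open>x = x1 + \<lambda> g1\<close> along the correspondence \<open>s1 = \<phi> s\<close> gives
  \<open>T = \<phi>' (T1 + \<lambda> g1')\<close> with \<open>g1' = - k1 T1 + \<tau>1 n1\<close>. Since \<open>g = g1\<close>, also \<open>g' = \<phi>' g1'\<close>, hence
  \<open>k = - g' \<bullet> T = \<phi>'\<^sup>2 (k1 - \<lambda> (k1\<^sup>2 + \<tau>1\<^sup>2))\<close> and \<open>\<tau> = g' \<bullet> n = \<phi>'\<^sup>2 \<tau>1\<close>, while \<open>|T| = 1\<close> gives
  \<open>\<phi>'\<^sup>2 ((1 - \<lambda> k1)\<^sup>2 + \<lambda>\<^sup>2 \<tau>1\<^sup>2) = 1\<close>. The identity is then polynomial algebra.\<close>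

lemma has_real_derivative_inner:
  fixes f g :: "real \<Rightarrow> 'a::real_inner"
  assumes "(f has_vector_derivative f') (at x)" "(g has_vector_derivative g') (at x)"
  shows "((\<lambda>t. f t \<bullet> g t) has_real_derivative (f x \<bullet> g' + f' \<bullet> g x)) (at x)"
  using bounded_bilinear.has_vector_derivative[OF bounded_bilinear_inner assms]
  by (simp add: has_real_derivative_iff_has_vector_derivative)

lemma has_vector_derivative_cross:
  fixes f g :: "real \<Rightarrow> real^3"
  assumes "(f has_vector_derivative f') (at x)" "(g has_vector_derivative g') (at x)"
  shows "((\<lambda>t. f t \<times> g t) has_vector_derivative (f x \<times> g' + f' \<times> g x)) (at x)"
proof -
  have "bounded_bilinear (\<lambda>x y::real^3. x \<times> y)"
    using bilinear_cross bilinear_conv_bounded_bilinear by blast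
  from bounded_bilinear.has_vector_derivative[OF this assms] show ?thesis by simp
qed

lemma has_vector_derivative_compose_has_derivative:
  assumes f: "(f has_vector_derivative f') (at s)" and g: "(g has_derivative D) (at (f s))"
  shows "((\<lambda>t. g (f t)) has_vector_derivative D f') (at s)"
proof -
  have "((g \<circ> f) has_derivative (D \<circ> (\<lambda>h. h *\<^sub>R f'))) (at s)"
    using diff_chain_at f g unfolding has_vector_derivative_def by blast
  moreover have "D \<circ> (\<lambda>h. h *\<^sub>R f') = (\<lambda>h. h *\<^sub>R D f')"
    using has_derivative_linear[OF g] by (auto simp: linear_scale)
  ultimately show ?thesis unfolding has_vector_derivative_def o_def by simp
qed

lemma has_vector_derivative_partial_fst:
  fixes X :: "real \<times> real \<Rightarrow> 'a::real_normed_vector"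
  assumes "(X has_derivative D) (at p)"
  shows "((\<lambda>t. X (t, snd p)) has_vector_derivative D (1, 0)) (at (fst p))"
proof -
  have "((\<lambda>t. (t, snd p)) has_vector_derivative (1::real, 0::real)) (at (fst p))"
    unfolding has_vector_derivative_def
    by (rule has_derivative_eq_rhs, rule has_derivative_Pair[OF has_derivative_ident has_derivative_const]) auto
  from has_vector_derivative_compose_has_derivative[OF this] assms show ?thesis by simp
qed

lemma has_vector_derivative_partial_snd:
  fixes X :: "real \<times> real \<Rightarrow> 'a::real_normed_vector"
  assumes "(X has_derivative D) (at p)"
  shows "((\<lambda>t. X (fst p, t)) has_vector_derivative D (0, 1)) (at (snd p))"
proof -
  have "((\<lambda>t. (fst p, t)) has_vector_derivative (0::real, 1::real)) (at (snd p))"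
    unfolding has_vector_derivative_def
    by (rule has_derivative_eq_rhs, rule has_derivative_Pair[OF has_derivative_const has_derivative_ident]) auto
  from has_vector_derivative_compose_has_derivative[OF this] assms show ?thesis by simp
qed

lemma linear_apply_pair:
  fixes D :: "real \<times> real \<Rightarrow> 'a::real_vector"
  assumes "linear D"
  shows "D (a, b) = a *\<^sub>R D (1, 0) + b *\<^sub>R D (0, 1)"
proof -
  have "(a, b) = a *\<^sub>R (1::real, 0::real) + b *\<^sub>R (0, 1)" by simp
  then show ?thesis using assms by (metis linear_add linear_scale)
qed

lemma has_real_derivative_locally_constant:
  assumes "(h has_real_derivative d) (at s)" "open S" "s \<in> S" "\<And>t. t \<in> S \<Longrightarrow> h t = c"
  shows "d = 0"
proof -
  have "((\<lambda>_. c) has_real_derivative d) (at s)"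
    using has_field_derivative_transform_within_open[OF assms(1-3)] assms(4) by metis
  then show ?thesis using DERIV_const DERIV_unique by blast
qed

lemma inner_locally_constant_derivative:
  fixes f g :: "real \<Rightarrow> 'a::real_inner"
  assumes "(f has_vector_derivative f') (at s)" "(g has_vector_derivative g') (at s)"
    and "open S" "s \<in> S" "\<And>t. t \<in> S \<Longrightarrow> f t \<bullet> g t = c"
  shows "f s \<bullet> g' + f' \<bullet> g s = 0"
  using has_real_derivative_locally_constant[OF has_real_derivative_inner[OF assms(1,2)] assms(3-5)] .

lemma has_vector_derivative_normalize:
  fixes w :: "real \<Rightarrow> 'a::real_inner"
  assumes w: "(w has_vector_derivative w') (at s)" and nz: "w s \<noteq> 0"
  shows "((\<lambda>t. (1 / norm (w t)) *\<^sub>R w t) has_vector_derivative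
      ((1 / norm (w s)) *\<^sub>R w' - ((w s \<bullet> w') / norm (w s) ^ 3) *\<^sub>R w s)) (at s)"
proof -
  have "((\<lambda>t. norm (w t)) has_real_derivative (w' \<bullet> sgn (w s))) (at s)"
    using has_vector_derivative_compose_has_derivative[OF w has_derivative_norm[OF nz]]
    by (simp add: has_real_derivative_iff_has_vector_derivative)
  from DERIV_inverse'[OF this] nz
  have "((\<lambda>t. inverse (norm (w t))) has_real_derivative
       - (inverse (norm (w s)) * (w' \<bullet> sgn (w s)) * inverse (norm (w s)))) (at s)"
    by simp
  from has_vector_derivative_scaleR[OF this w] nz show ?thesis
    by (simp add: sgn_div_norm inner_commute power3_eq_cube field_simps)
qed

lemma cross_cross_left: "((a::real^3) \<times> b) \<times> c = (a \<bullet> c) *\<^sub>R b - (b \<bullet> c) *\<^sub>R a"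
  unfolding vec_eq_iff forall_3 by (simp add: cross3_def inner_vec_def sum_3 algebra_simps)

lemma cross_cross_unit_orthogonal:
  fixes a b :: "real^3"
  assumes "norm a = 1" "a \<bullet> b = 0"
  shows "(a \<times> b) \<times> a = b" "a \<times> (b \<times> a) = b" "(b \<times> a) \<times> a = - b"
proof -
  have "a \<bullet> a = 1" using assms(1) by (simp add: norm_eq_1)
  then show "(a \<times> b) \<times> a = b" "(b \<times> a) \<times> a = - b"
    using assms(2) by (simp_all add: cross_cross_left inner_commute)
  then show "a \<times> (b \<times> a) = b" by (metis cross_skew)
qed

lemma norm_cross_unit_orthogonal:
  fixes a b :: "real^3"
  assumes "norm a = 1" "norm b = 1" "a \<bullet> b = 0"
  shows "norm (a \<times> b) = 1"
  using norm_cross_dot[of a b] assms by (simp add: abs_square_eq_1)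

lemma inner_cross_square:
  fixes d u v :: "real^3"
  shows "(d \<bullet> (u \<times> v))\<^sup>2 = (d \<bullet> d) * (u \<bullet> u) * (v \<bullet> v) - (d \<bullet> d) * (u \<bullet> v)\<^sup>2
    - (d \<bullet> u)\<^sup>2 * (v \<bullet> v) - (d \<bullet> v)\<^sup>2 * (u \<bullet> u) + 2 * (d \<bullet> u) * (d \<bullet> v) * (u \<bullet> v)"
  unfolding cross3_def inner_vec_def sum_3 by simp algebra

lemma inner_self_orthonormal_frame:
  fixes d a b :: "real^3"
  assumes "norm a = 1" "norm b = 1" "a \<bullet> b = 0"
  shows "d \<bullet> d = (d \<bullet> a)\<^sup>2 + (d \<bullet> b)\<^sup>2 + (d \<bullet> (a \<times> b))\<^sup>2"
  using inner_cross_square[of d a b] assms by (simp add: norm_eq_1)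

lemma orthogonal_patch_frame:
  assumes "regular_patch X U" "orthogonal_patch X U" "q \<in> U"
  shows "Xu X q \<noteq> 0" "Xv X q \<noteq> 0"
    "norm (e1 X q) = 1" "norm (e2 X q) = 1" "e1 X q \<bullet> e2 X q = 0"
    "unit_normal X q = e1 X q \<times> e2 X q"
proof -
  have uv: "Xu X q \<bullet> Xv X q = 0" using assms(2,3) by (simp add: orthogonal_patch_def)
  have "Xu X q \<times> Xv X q \<noteq> 0" using assms(1,3) by (simp add: regular_patch_def)
  then show u: "Xu X q \<noteq> 0" and v: "Xv X q \<noteq> 0" by auto
  then show "norm (e1 X q) = 1" "norm (e2 X q) = 1" by (simp_all add: e1_def e2_def)
  show "e1 X q \<bullet> e2 X q = 0" using uv by (simp add: e1_def e2_def)
  have "(norm (Xu X q \<times> Xv X q))\<^sup>2 = (norm (Xu X q) * norm (Xv X q))\<^sup>2"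
    using norm_cross_dot[of "Xu X q" "Xv X q"] uv by simp
  then have "norm (Xu X q \<times> Xv X q) = norm (Xu X q) * norm (Xv X q)" by simp
  then show "unit_normal X q = e1 X q \<times> e2 X q"
    by (simp add: unit_normal_def e1_def e2_def cross_mult_left cross_mult_right)
qed

lemma curve_on_patch_darboux_frame:
  assumes rp: "regular_patch X U" and op: "orthogonal_patch X U"
    and cp: "curve_on_patch X U \<alpha> I x \<sigma>" and t: "t \<in> I"
  shows "norm (unit_normal X (\<alpha> t)) = 1" "tangent x t \<bullet> unit_normal X (\<alpha> t) = 0"
    "norm (darboux_g x (\<lambda>s. unit_normal X (\<alpha> s)) t) = 1"
    "darboux_g x (\<lambda>s. unit_normal X (\<alpha> s)) differentiable (at t)"
proof -
  define q where "q = \<alpha> t"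
  have q: "q \<in> U" and T: "norm (tangent x t) = 1"
    and Tq: "tangent x t = cos (\<sigma> t) *\<^sub>R e1 X q + sin (\<sigma> t) *\<^sub>R e2 X q"
    using cp t unfolding q_def curve_on_patch_def by blast+
  note frame = orthogonal_patch_frame[OF rp op q]
  show TN: "tangent x t \<bullet> unit_normal X (\<alpha> t) = 0"
    unfolding q_def[symmetric] Tq frame(6) by (simp add: inner_add_left dot_cross_self)
  show "norm (unit_normal X (\<alpha> t)) = 1"
    using norm_cross_unit_orthogonal[OF frame(3-5)] frame(6) q_def by simp
  with T TN show "norm (darboux_g x (\<lambda>s. unit_normal X (\<alpha> s)) t) = 1"
    unfolding darboux_g_def by (simp add: norm_cross_unit_orthogonal inner_commute)
  obtain a' where da: "(\<alpha> has_vector_derivative a') (at t)"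
    using cp t unfolding curve_on_patch_def using vector_derivative_works by blast
  obtain DU DV where "(Xu X has_derivative DU) (at q)" "(Xv X has_derivative DV) (at q)"
    using rp q unfolding regular_patch_def differentiable_def by blast
  then have "((\<lambda>s. Xu X (\<alpha> s)) has_vector_derivative DU a') (at t)"
      "((\<lambda>s. Xv X (\<alpha> s)) has_vector_derivative DV a') (at t)"
    using has_vector_derivative_compose_has_derivative[OF da] q_def by simp_all
  then have dN: "((\<lambda>s. unit_normal X (\<alpha> s)) has_vector_derivative
      (1 / norm (Xu X q \<times> Xv X q)) *\<^sub>R (Xu X q \<times> DV a' + DU a' \<times> Xv X q)
      - ((Xu X q \<times> Xv X q) \<bullet> (Xu X q \<times> DV a' + DU a' \<times> Xv X q)
          / norm (Xu X q \<times> Xv X q) ^ 3) *\<^sub>R (Xu X q \<times> Xv X q)) (at t)"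
    unfolding unit_normal_def q_def
    by (rule has_vector_derivative_normalize[OF has_vector_derivative_cross])
       (use rp q in \<open>auto simp: q_def regular_patch_def\<close>)
  obtain T' where dT: "(tangent x has_vector_derivative T') (at t)"
    using cp t unfolding curve_on_patch_def using vector_derivative_works by blast
  show "darboux_g x (\<lambda>s. unit_normal X (\<alpha> s)) differentiable (at t)"
    unfolding darboux_g_def by (rule differentiableI_vector[OF has_vector_derivative_cross[OF dN dT]])
qed

lemma geodesic_curvature_unit_speed:
  assumes "norm (tangent c t) = 1"
  shows "geodesic_curvature c N t = vector_derivative (tangent c) (at t) \<bullet> darboux_g c N t"
  using assms by (simp add: geodesic_curvature_def darboux_g_def)

lemma inner_derivative_rotated_frame:
  fixes e1 e2 T :: "real \<Rightarrow> real^3"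
  assumes S: "open S" "s \<in> S"
    and frame: "\<And>t. t \<in> S \<Longrightarrow> e1 t \<bullet> e1 t = 1 \<and> e2 t \<bullet> e2 t = 1 \<and> e1 t \<bullet> e2 t = 0"
    and T: "\<And>t. t \<in> S \<Longrightarrow> T t = cos (\<sigma> t) *\<^sub>R e1 t + sin (\<sigma> t) *\<^sub>R e2 t"
    and d1: "(e1 has_vector_derivative e1') (at s)"
    and d2: "(e2 has_vector_derivative e2') (at s)"
    and d\<sigma>: "(\<sigma> has_real_derivative \<sigma>') (at s)"
  shows "vector_derivative T (at s) \<bullet> (cos (\<sigma> s) *\<^sub>R e2 s - sin (\<sigma> s) *\<^sub>R e1 s) = \<sigma>' + e1' \<bullet> e2 s"
proof -
  have "e1 s \<bullet> e1' + e1' \<bullet> e1 s = 0"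
    by (rule inner_locally_constant_derivative[OF d1 d1 S]) (use frame in blast)
  then have e11: "e1' \<bullet> e1 s = 0" by (simp add: inner_commute)
  have "e2 s \<bullet> e2' + e2' \<bullet> e2 s = 0"
    by (rule inner_locally_constant_derivative[OF d2 d2 S]) (use frame in blast)
  then have e22: "e2' \<bullet> e2 s = 0" by (simp add: inner_commute)
  have "e1 s \<bullet> e2' + e1' \<bullet> e2 s = 0"
    by (rule inner_locally_constant_derivative[OF d1 d2 S]) (use frame in blast)
  then have e21: "e2' \<bullet> e1 s = - (e1' \<bullet> e2 s)" by (simp add: inner_commute add_eq_0_iff)
  define c where "c = cos (\<sigma> s)"
  define n where "n = sin (\<sigma> s)"
  have "((\<lambda>t. cos (\<sigma> t) *\<^sub>R e1 t + sin (\<sigma> t) *\<^sub>R e2 t) has_vector_derivative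
      (c *\<^sub>R e1' + (- n * \<sigma>') *\<^sub>R e1 s) + (n *\<^sub>R e2' + (c * \<sigma>') *\<^sub>R e2 s)) (at s)"
    unfolding c_def n_def
    by (intro has_vector_derivative_add has_vector_derivative_scaleR DERIV_fun_cos DERIV_fun_sin d1 d2 d\<sigma>)
  then have "(T has_vector_derivative
      (c *\<^sub>R e1' + (- n * \<sigma>') *\<^sub>R e1 s) + (n *\<^sub>R e2' + (c * \<sigma>') *\<^sub>R e2 s)) (at s)"
    by (rule has_vector_derivative_transform_within_open[OF _ S]) (simp add: T)
  then have vT: "vector_derivative T (at s)
      = (c *\<^sub>R e1' + (- n * \<sigma>') *\<^sub>R e1 s) + (n *\<^sub>R e2' + (c * \<sigma>') *\<^sub>R e2 s)"
    by (rule vector_derivative_at)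
  have "vector_derivative T (at s) \<bullet> (c *\<^sub>R e2 s - n *\<^sub>R e1 s) = (c\<^sup>2 + n\<^sup>2) * (\<sigma>' + e1' \<bullet> e2 s)"
    unfolding vT using frame[OF S(2)] e11 e22 e21
    by (simp add: inner_add_left inner_diff_left inner_diff_right inner_commute[of "e2 s" "e1 s"] power2_eq_square ring_distribs)
  then show ?thesis by (simp add: c_def n_def)
qed

lemma kg_ucurve_eq:
  assumes "regular_patch X U" "orthogonal_patch X U" "p \<in> U"
    and DU: "(Xu X has_derivative DU) (at p)"
  shows "kg_ucurve X p = (DU (1, 0) \<bullet> e2 X p) / (norm (Xu X p))\<^sup>2"
proof -
  note frame = orthogonal_patch_frame[OF assms(1-3)]
  have "tangent (\<lambda>t. X (t, snd p)) = (\<lambda>t. Xu X (t, snd p))"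
    by (simp add: tangent_def Xu_def fun_eq_iff)
  moreover have "vector_derivative (\<lambda>t. Xu X (t, snd p)) (at (fst p)) = DU (1, 0)"
    by (rule vector_derivative_at[OF has_vector_derivative_partial_fst[OF DU]])
  moreover have "unit_normal X p \<times> Xu X p = norm (Xu X p) *\<^sub>R e2 X p"
  proof -
    have "Xu X p = norm (Xu X p) *\<^sub>R e1 X p" using frame(1) by (simp add: e1_def)
    then show ?thesis
      using frame(6) cross_cross_unit_orthogonal(1)[OF frame(3,5)] by (metis cross_mult_right)
  qed
  ultimately show ?thesis
    using frame(1) by (simp add: kg_ucurve_def geodesic_curvature_def power2_eq_square power3_eq_cube)
qed

lemma kg_vcurve_eq:
  assumes "regular_patch X U" "orthogonal_patch X U" "p \<in> U"
    and DV: "(Xv X has_derivative DV) (at p)"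
  shows "kg_vcurve X p = - (DV (0, 1) \<bullet> e1 X p) / (norm (Xv X p))\<^sup>2"
proof -
  note frame = orthogonal_patch_frame[OF assms(1-3)]
  have "tangent (\<lambda>t. X (fst p, t)) = (\<lambda>t. Xv X (fst p, t))"
    by (simp add: tangent_def Xv_def fun_eq_iff)
  moreover have "vector_derivative (\<lambda>t. Xv X (fst p, t)) (at (snd p)) = DV (0, 1)"
    by (rule vector_derivative_at[OF has_vector_derivative_partial_snd[OF DV]])
  moreover have "unit_normal X p \<times> Xv X p = - (norm (Xv X p) *\<^sub>R e1 X p)"
  proof -
    have "Xv X p = norm (Xv X p) *\<^sub>R e2 X p" using frame(2) by (simp add: e2_def)
    moreover have "e2 X p \<bullet> e1 X p = 0" using frame(5) by (simp add: inner_commute)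
    ultimately show ?thesis
      using frame(6) cross_cross_unit_orthogonal(3)[OF frame(4)] by (metis cross_mult_right scaleR_minus_right)
  qed
  ultimately show ?thesis
    using frame(2) by (simp add: kg_vcurve_def geodesic_curvature_def power2_eq_square power3_eq_cube)
qed

text \<open>Obtained by differentiating \<open>Xu \<bullet> Xv = 0\<close> along the curve \<open>u = const\<close>; no symmetry of
  second derivatives is needed.\<close>

lemma orthogonal_patch_mixed_partials:
  assumes "regular_patch X U" "orthogonal_patch X U" "p \<in> U"
    and DU: "(Xu X has_derivative DU) (at p)" and DV: "(Xv X has_derivative DV) (at p)"
  shows "Xu X p \<bullet> DV (0, 1) + DU (0, 1) \<bullet> Xv X p = 0"
proof -
  have "open ((\<lambda>t. (fst p, t)) -` U)"
    using assms(1) by (intro continuous_open_vimage) (auto simp: regular_patch_def)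
  from inner_locally_constant_derivative[OF has_vector_derivative_partial_snd[OF DU]
      has_vector_derivative_partial_snd[OF DV] this]
  show ?thesis using assms(2,3) by (simp add: orthogonal_patch_def)
qed

lemma derivative_e1_inner_e2_eq_kg:
  assumes rp: "regular_patch X U" and op: "orthogonal_patch X U" and p: "p \<in> U"
    and DU: "(Xu X has_derivative DU) (at p)" and DV: "(Xv X has_derivative DV) (at p)"
  shows "(DU (cos \<theta> / norm (Xu X p), sin \<theta> / norm (Xv X p)) \<bullet> e2 X p) / norm (Xu X p)
    = kg_ucurve X p * cos \<theta> + kg_vcurve X p * sin \<theta>"
proof -
  note frame = orthogonal_patch_frame[OF rp op p]
  define nu nv where "nu = norm (Xu X p)" and "nv = norm (Xv X p)"
  have nu: "nu \<noteq> 0" and nv: "nv \<noteq> 0" using frame(1,2) by (simp_all add: nu_def nv_def)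
  have "Xu X p \<bullet> DV (0, 1) + DU (0, 1) \<bullet> Xv X p = 0"
    by (rule orthogonal_patch_mixed_partials[OF rp op p DU DV])
  then have "nu * (e1 X p \<bullet> DV (0, 1)) + nv * (DU (0, 1) \<bullet> e2 X p) = 0"
    using nu nv by (simp add: nu_def nv_def e1_def e2_def)
  moreover have "nv * nv * kg_vcurve X p = - (DV (0, 1) \<bullet> e1 X p)"
    using kg_vcurve_eq[OF rp op p DV] nv by (simp add: nv_def power2_eq_square)
  ultimately have "nv * (DU (0, 1) \<bullet> e2 X p) = nv * (nu * nv * kg_vcurve X p)"
    by (simp add: inner_commute) algebra
  then have k2: "DU (0, 1) \<bullet> e2 X p = nu * nv * kg_vcurve X p"
    using nv by simp
  have k1: "DU (1, 0) \<bullet> e2 X p = nu * nu * kg_ucurve X p"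
    using kg_ucurve_eq[OF rp op p DU] nu by (simp add: nu_def power2_eq_square)
  have "DU (cos \<theta> / nu, sin \<theta> / nv) = (cos \<theta> / nu) *\<^sub>R DU (1, 0) + (sin \<theta> / nv) *\<^sub>R DU (0, 1)"
    by (rule linear_apply_pair[OF has_derivative_linear[OF DU]])
  then show ?thesis
    using nu nv by (simp add: nu_def[symmetric] nv_def[symmetric] inner_add_left k1 k2 field_simps)
qed

lemma curve_on_patch_parameter_velocity:
  assumes rp: "regular_patch X U" and op: "orthogonal_patch X U"
    and cp: "curve_on_patch X U \<alpha> I x \<sigma>" and s: "s \<in> I"
    and d\<alpha>: "(\<alpha> has_vector_derivative (a, b)) (at s)"
  shows "a = cos (\<sigma> s) / norm (Xu X (\<alpha> s))" "b = sin (\<sigma> s) / norm (Xv X (\<alpha> s))"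
proof -
  define p where "p = \<alpha> s"
  have p: "p \<in> U" and oI: "open I" and on_patch: "\<And>t. t \<in> I \<Longrightarrow> x t = X (\<alpha> t)"
    and T: "tangent x s = cos (\<sigma> s) *\<^sub>R e1 X p + sin (\<sigma> s) *\<^sub>R e2 X p"
    using cp s unfolding curve_on_patch_def p_def by blast+
  note frame = orthogonal_patch_frame[OF rp op p]
  obtain DX where DX: "(X has_derivative DX) (at p)"
    using rp p unfolding regular_patch_def differentiable_def by blast
  have "((\<lambda>t. X (\<alpha> t)) has_vector_derivative DX (a, b)) (at s)"
    using has_vector_derivative_compose_has_derivative[OF d\<alpha>] DX p_def by simp
  then have "(x has_vector_derivative DX (a, b)) (at s)"
    by (rule has_vector_derivative_transform_within_open[OF _ oI s]) (simp add: on_patch)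
  then have "tangent x s = a *\<^sub>R DX (1, 0) + b *\<^sub>R DX (0, 1)"
    unfolding tangent_def linear_apply_pair[OF has_derivative_linear[OF DX], symmetric]
    by (rule vector_derivative_at)
  also have "\<dots> = (a * norm (Xu X p)) *\<^sub>R e1 X p + (b * norm (Xv X p)) *\<^sub>R e2 X p"
    using frame(1,2) vector_derivative_at[OF has_vector_derivative_partial_fst[OF DX]]
      vector_derivative_at[OF has_vector_derivative_partial_snd[OF DX]]
    by (simp add: Xu_def[symmetric] Xv_def[symmetric] e1_def e2_def)
  finally have eq: "cos (\<sigma> s) *\<^sub>R e1 X p + sin (\<sigma> s) *\<^sub>R e2 X p
      = (a * norm (Xu X p)) *\<^sub>R e1 X p + (b * norm (Xv X p)) *\<^sub>R e2 X p"
    unfolding T .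
  have e11: "e1 X p \<bullet> e1 X p = 1" and e22: "e2 X p \<bullet> e2 X p = 1"
    and e21: "e2 X p \<bullet> e1 X p = 0"
    using frame(3-5) by (simp_all add: norm_eq_1 inner_commute)
  have "cos (\<sigma> s) = a * norm (Xu X p)" "sin (\<sigma> s) = b * norm (Xv X p)"
    using arg_cong[OF eq, of "\<lambda>v. v \<bullet> e1 X p"] arg_cong[OF eq, of "\<lambda>v. v \<bullet> e2 X p"]
    by (simp_all add: inner_add_left e11 e22 e21 frame(5))
  with frame(1,2) show "a = cos (\<sigma> s) / norm (Xu X (\<alpha> s))" "b = sin (\<sigma> s) / norm (Xv X (\<alpha> s))"
    unfolding p_def by simp_all
qed

lemma curve_on_patch_darboux_g:
  assumes rp: "regular_patch X U" and op: "orthogonal_patch X U"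
    and cp: "curve_on_patch X U \<alpha> I x \<sigma>" and s: "s \<in> I"
  shows "darboux_g x (\<lambda>s. unit_normal X (\<alpha> s)) s
    = cos (\<sigma> s) *\<^sub>R e2 X (\<alpha> s) - sin (\<sigma> s) *\<^sub>R e1 X (\<alpha> s)"
proof -
  have p: "\<alpha> s \<in> U" and T: "tangent x s = cos (\<sigma> s) *\<^sub>R e1 X (\<alpha> s) + sin (\<sigma> s) *\<^sub>R e2 X (\<alpha> s)"
    using cp s unfolding curve_on_patch_def by blast+
  note frame = orthogonal_patch_frame[OF rp op p]
  have "e2 X (\<alpha> s) \<bullet> e1 X (\<alpha> s) = 0" using frame(5) by (simp add: inner_commute)
  then show ?thesis
    using frame(6) cross_cross_unit_orthogonal(1)[OF frame(3,5)] cross_cross_unit_orthogonal(3)[OF frame(4)]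
    by (simp add: darboux_g_def T cross_add_right cross_mult_right)
qed

lemma frame_along_curve_derivatives:
  assumes rp: "regular_patch X U" and op: "orthogonal_patch X U"
    and cp: "curve_on_patch X U \<alpha> I x \<sigma>" and s: "s \<in> I"
  obtains e1' e2' where "((\<lambda>t. e1 X (\<alpha> t)) has_vector_derivative e1') (at s)"
    "((\<lambda>t. e2 X (\<alpha> t)) has_vector_derivative e2') (at s)"
    "e1' \<bullet> e2 X (\<alpha> s) = kg_ucurve X (\<alpha> s) * cos (\<sigma> s) + kg_vcurve X (\<alpha> s) * sin (\<sigma> s)"
proof -
  define p where "p = \<alpha> s"
  have p: "p \<in> U" and d\<alpha>: "\<alpha> differentiable (at s)"
    using cp s unfolding curve_on_patch_def p_def by blast+
  note frame = orthogonal_patch_frame[OF rp op p]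
  obtain a b where d\<alpha>': "(\<alpha> has_vector_derivative (a, b)) (at s)"
    using vector_derivative_works d\<alpha> by (metis surj_pair)
  obtain DU DV where DU: "(Xu X has_derivative DU) (at p)" and DV: "(Xv X has_derivative DV) (at p)"
    using rp p unfolding regular_patch_def differentiable_def by blast
  have "((\<lambda>t. Xu X (\<alpha> t)) has_vector_derivative DU (a, b)) (at s)"
    using has_vector_derivative_compose_has_derivative[OF d\<alpha>'] DU p_def by simp
  then have d1: "((\<lambda>t. e1 X (\<alpha> t)) has_vector_derivative
      (1 / norm (Xu X p)) *\<^sub>R DU (a, b) - ((Xu X p \<bullet> DU (a, b)) / norm (Xu X p) ^ 3) *\<^sub>R Xu X p) (at s)"
    unfolding e1_def p_def by (rule has_vector_derivative_normalize) (use frame(1) p_def in simp)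
  have "((\<lambda>t. Xv X (\<alpha> t)) has_vector_derivative DV (a, b)) (at s)"
    using has_vector_derivative_compose_has_derivative[OF d\<alpha>'] DV p_def by simp
  then obtain e2' where d2: "((\<lambda>t. e2 X (\<alpha> t)) has_vector_derivative e2') (at s)"
    unfolding e2_def using has_vector_derivative_normalize frame(2) p_def by blast
  have "Xu X p \<bullet> e2 X p = 0" using frame(1,5) by (simp add: e1_def)
  then have "((1 / norm (Xu X p)) *\<^sub>R DU (a, b) - ((Xu X p \<bullet> DU (a, b)) / norm (Xu X p) ^ 3) *\<^sub>R Xu X p)
        \<bullet> e2 X (\<alpha> s)
      = (DU (cos (\<sigma> s) / norm (Xu X p), sin (\<sigma> s) / norm (Xv X p)) \<bullet> e2 X p) / norm (Xu X p)"
    using curve_on_patch_parameter_velocity[OF rp op cp s d\<alpha>'] by (simp add: p_def inner_diff_left)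
  also have "\<dots> = kg_ucurve X (\<alpha> s) * cos (\<sigma> s) + kg_vcurve X (\<alpha> s) * sin (\<sigma> s)"
    using derivative_e1_inner_e2_eq_kg[OF rp op p DU DV] by (simp add: p_def)
  finally show ?thesis using that d1 d2 by blast
qed

lemma liouville_formula:
  assumes rp: "regular_patch X U" and op: "orthogonal_patch X U"
    and cp: "curve_on_patch X U \<alpha> I x \<sigma>" and s: "s \<in> I"
  shows "geodesic_curvature x (\<lambda>s. unit_normal X (\<alpha> s)) s
    = deriv \<sigma> s + kg_ucurve X (\<alpha> s) * cos (\<sigma> s) + kg_vcurve X (\<alpha> s) * sin (\<sigma> s)"
proof -
  have oI: "open I" and unit: "norm (tangent x s) = 1" and d\<sigma>: "\<sigma> differentiable (at s)"
    and T: "\<And>t. t \<in> I \<Longrightarrow> \<alpha> t \<in> U \<and> tangent x t = cos (\<sigma> t) *\<^sub>R e1 X (\<alpha> t) + sin (\<sigma> t) *\<^sub>R e2 X (\<alpha> t)"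
    using cp s unfolding curve_on_patch_def by blast+
  obtain e1' e2' where d1: "((\<lambda>t. e1 X (\<alpha> t)) has_vector_derivative e1') (at s)"
    and d2: "((\<lambda>t. e2 X (\<alpha> t)) has_vector_derivative e2') (at s)"
    and connection: "e1' \<bullet> e2 X (\<alpha> s) = kg_ucurve X (\<alpha> s) * cos (\<sigma> s) + kg_vcurve X (\<alpha> s) * sin (\<sigma> s)"
    using frame_along_curve_derivatives[OF rp op cp s] by blast
  have "vector_derivative (tangent x) (at s) \<bullet> (cos (\<sigma> s) *\<^sub>R e2 X (\<alpha> s) - sin (\<sigma> s) *\<^sub>R e1 X (\<alpha> s))
      = deriv \<sigma> s + e1' \<bullet> e2 X (\<alpha> s)"
  proof (rule inner_derivative_rotated_frame[OF oI s _ _ d1 d2])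
    show "(\<sigma> has_real_derivative deriv \<sigma> s) (at s)"
      using d\<sigma> DERIV_deriv_iff_real_differentiable by blast
    fix t assume "t \<in> I"
    with T show "tangent x t = cos (\<sigma> t) *\<^sub>R e1 X (\<alpha> t) + sin (\<sigma> t) *\<^sub>R e2 X (\<alpha> t)" by blast
    from \<open>t \<in> I\<close> T have "\<alpha> t \<in> U" by blast
    from orthogonal_patch_frame(3-5)[OF rp op this]
    show "e1 X (\<alpha> t) \<bullet> e1 X (\<alpha> t) = 1 \<and> e2 X (\<alpha> t) \<bullet> e2 X (\<alpha> t) = 1 \<and> e1 X (\<alpha> t) \<bullet> e2 X (\<alpha> t) = 0"
      by (simp add: norm_eq_1)
  qed
  then show ?thesis
    using geodesic_curvature_unit_speed[OF unit] curve_on_patch_darboux_g[OF rp op cp s] connection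
    by simp
qed

lemma darboux_g_derivative_inner_tangent:
  assumes "(tangent c has_vector_derivative T') (at t)" "(darboux_g c N has_vector_derivative g') (at t)"
  shows "g' \<bullet> tangent c t = - (T' \<bullet> darboux_g c N t)"
proof -
  have "darboux_g c N t \<bullet> T' + g' \<bullet> tangent c t = 0"
    by (rule inner_locally_constant_derivative[OF assms(2,1) open_UNIV UNIV_I])
       (simp add: darboux_g_def dot_cross_self)
  then show ?thesis by (simp add: inner_commute add_eq_0_iff)
qed

lemma inner_self_darboux_g_derivative:
  assumes dg: "(darboux_g c N has_vector_derivative g') (at t)"
    and J: "open J" "t \<in> J" "\<And>r. r \<in> J \<Longrightarrow> norm (darboux_g c N r) = 1"
    and frame: "norm (N t) = 1" "norm (tangent c t) = 1" "tangent c t \<bullet> N t = 0"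
  shows "g' \<bullet> g' = (g' \<bullet> tangent c t)\<^sup>2 + (g' \<bullet> N t)\<^sup>2"
proof -
  have "darboux_g c N t \<bullet> g' + g' \<bullet> darboux_g c N t = 0"
    by (rule inner_locally_constant_derivative[OF dg dg J(1,2)]) (use J(3) in \<open>simp add: norm_eq_1\<close>)
  then have "g' \<bullet> (N t \<times> tangent c t) = 0" by (simp add: darboux_g_def inner_commute)
  moreover have "N t \<bullet> tangent c t = 0" using frame(3) by (simp add: inner_commute)
  ultimately show ?thesis
    using inner_self_orthonormal_frame[OF frame(1,2), of g'] by simp
qed

lemma bertrand_D_pair_derivatives:
  fixes x x1 N N1 :: "real \<Rightarrow> real^3"
  assumes bp: "bertrand_D_pair x N I x1 N1 I1 \<phi> lam" and I: "open I" "s \<in> I"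
    and d\<phi>: "(\<phi> has_vector_derivative p) (at s)"
    and dx1: "x1 differentiable (at (\<phi> s))"
    and dg1: "(darboux_g x1 N1 has_vector_derivative D) (at (\<phi> s))"
  shows "(darboux_g x N has_vector_derivative p *\<^sub>R D) (at s)"
    "tangent x s = p *\<^sub>R (tangent x1 (\<phi> s) + lam *\<^sub>R D)"
proof -
  have corr: "\<And>t. t \<in> I \<Longrightarrow> darboux_g x N t = darboux_g x1 N1 (\<phi> t)
      \<and> x t = x1 (\<phi> t) + lam *\<^sub>R darboux_g x1 N1 (\<phi> t)"
    using bp unfolding bertrand_D_pair_def by blast
  have dg1\<phi>: "((\<lambda>t. darboux_g x1 N1 (\<phi> t)) has_vector_derivative p *\<^sub>R D) (at s)"
    using vector_diff_chain_at[OF d\<phi> dg1] unfolding o_def .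
  then show "(darboux_g x N has_vector_derivative p *\<^sub>R D) (at s)"
    by (rule has_vector_derivative_transform_within_open[OF _ I]) (simp add: corr)
  have "(x1 has_vector_derivative tangent x1 (\<phi> s)) (at (\<phi> s))"
    using dx1 vector_derivative_works unfolding tangent_def by blast
  from vector_diff_chain_at[OF d\<phi> this] dg1\<phi>
  have "((\<lambda>t. x1 (\<phi> t) + lam *\<^sub>R darboux_g x1 N1 (\<phi> t)) has_vector_derivative
      p *\<^sub>R tangent x1 (\<phi> s) + lam *\<^sub>R (p *\<^sub>R D)) (at s)"
    by (intro has_vector_derivative_add bounded_linear.has_vector_derivative[OF bounded_linear_scaleR_right])
       (simp_all add: o_def)
  then have "(x has_vector_derivative p *\<^sub>R tangent x1 (\<phi> s) + lam *\<^sub>R (p *\<^sub>R D)) (at s)"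
    by (rule has_vector_derivative_transform_within_open[OF _ I]) (simp add: corr)
  then have "tangent x s = p *\<^sub>R tangent x1 (\<phi> s) + lam *\<^sub>R (p *\<^sub>R D)"
    unfolding tangent_def by (rule vector_derivative_at)
  then show "tangent x s = p *\<^sub>R (tangent x1 (\<phi> s) + lam *\<^sub>R D)"
    by (simp add: algebra_simps)
qed

lemma bertrand_D_pair_curvature_relation:
  fixes x x1 N N1 :: "real \<Rightarrow> real^3"
  assumes bp: "bertrand_D_pair x N I x1 N1 I1 \<phi> lam"
    and I: "open I" "s \<in> I" and I1: "open I1"
    and dx1: "x1 differentiable (at (\<phi> s))"
    and dT: "tangent x differentiable (at s)" and dT1: "tangent x1 differentiable (at (\<phi> s))"
    and dg1: "darboux_g x1 N1 differentiable (at (\<phi> s))"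
    and g1_unit: "\<And>t. t \<in> I1 \<Longrightarrow> norm (darboux_g x1 N1 t) = 1"
    and frame: "norm (tangent x s) = 1" "tangent x s \<bullet> N s = 0"
    and frame1: "norm (N1 (\<phi> s)) = 1" "norm (tangent x1 (\<phi> s)) = 1" "tangent x1 (\<phi> s) \<bullet> N1 (\<phi> s) = 0"
  shows "geodesic_curvature x N s - geodesic_curvature x1 N1 (\<phi> s)
    = lam * (geodesic_curvature x N s * geodesic_curvature x1 N1 (\<phi> s)
             - geodesic_torsion x N s * geodesic_torsion x1 N1 (\<phi> s))"
proof -
  define s1 T1 where "s1 = \<phi> s" and "T1 = tangent x1 s1"
  have s1: "s1 \<in> I1" using bp I(2) unfolding bertrand_D_pair_def s1_def by (meson bij_betwE)
  obtain p where d\<phi>: "(\<phi> has_vector_derivative p) (at s)"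
    using bp I(2) vector_derivative_works unfolding bertrand_D_pair_def by blast
  obtain D where D: "(darboux_g x1 N1 has_vector_derivative D) (at s1)"
    using dg1 vector_derivative_works unfolding s1_def by blast
  obtain T' where T': "(tangent x has_vector_derivative T') (at s)"
    using dT vector_derivative_works by blast
  obtain T1' where T1': "(tangent x1 has_vector_derivative T1') (at s1)"
    using dT1 vector_derivative_works unfolding s1_def by blast
  note derivs = bertrand_D_pair_derivatives[OF bp I d\<phi> dx1 D[unfolded s1_def]]
  have T: "tangent x s = p *\<^sub>R (T1 + lam *\<^sub>R D)"
    using derivs(2) by (simp add: T1_def s1_def)
  have k1: "geodesic_curvature x1 N1 s1 = - (D \<bullet> T1)"
    using geodesic_curvature_unit_speed[OF frame1(2)[folded s1_def]]
      darboux_g_derivative_inner_tangent[OF T1' D]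
    by (simp add: vector_derivative_at[OF T1'] T1_def)
  have \<tau>1: "geodesic_torsion x1 N1 s1 = D \<bullet> N1 s1"
    using vector_derivative_at[OF D] by (simp add: geodesic_torsion_def)
  have DD: "D \<bullet> D = (D \<bullet> T1)\<^sup>2 + (D \<bullet> N1 s1)\<^sup>2"
    using inner_self_darboux_g_derivative[OF D I1 s1 g1_unit frame1[folded s1_def]]
    by (simp add: T1_def)
  have "geodesic_curvature x N s = - (p * (D \<bullet> tangent x s))"
    using geodesic_curvature_unit_speed[OF frame(1)] darboux_g_derivative_inner_tangent[OF T' derivs(1)]
    by (simp add: vector_derivative_at[OF T'])
  then have k: "geodesic_curvature x N s = - (p\<^sup>2 * (D \<bullet> T1 + lam * (D \<bullet> D)))"
    by (simp add: T inner_add_right power2_eq_square algebra_simps)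
  have "N s = tangent x s \<times> darboux_g x1 N1 s1"
    using cross_cross_unit_orthogonal(2)[OF frame] bp I(2)
    by (simp add: bertrand_D_pair_def darboux_g_def s1_def)
  then have \<tau>: "geodesic_torsion x N s = p\<^sup>2 * (D \<bullet> N1 s1)"
    using vector_derivative_at[OF derivs(1)]
      cross_cross_unit_orthogonal(2)[OF frame1(2,3)[folded s1_def, folded T1_def]]
    by (simp add: geodesic_torsion_def T T1_def cross_add_left cross_mult_left
        inner_add_right dot_cross_self power2_eq_square darboux_g_def)
  have "T1 \<bullet> T1 = 1" "tangent x s \<bullet> tangent x s = 1"
    using frame1(2) frame(1) by (simp_all add: T1_def s1_def norm_eq_1)
  then have unit: "p\<^sup>2 * (1 + 2 * lam * (D \<bullet> T1) + lam\<^sup>2 * (D \<bullet> D)) = 1"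
    unfolding T by (simp add: inner_add_left inner_add_right inner_commute[of D T1] power2_eq_square algebra_simps)
  from k k1 \<tau>1 \<tau> DD unit show ?thesis
    unfolding s1_def[symmetric] by algebra
qed

theorem corollary2:
  fixes X X1 :: "real * real \<Rightarrow> real^3"
    and U U1 :: "(real * real) set"
    and \<alpha> \<alpha>1 :: "real \<Rightarrow> real * real"
    and x x1 :: "real \<Rightarrow> real^3"
    and \<sigma> \<sigma>1 \<phi> :: "real \<Rightarrow> real"
    and I I1 :: "real set"
    and lam :: real
  assumes "regular_patch X U" and "orthogonal_patch X U"
    and "regular_patch X1 U1" and "orthogonal_patch X1 U1"
    and "curve_on_patch X U \<alpha> I x \<sigma>"
    and "curve_on_patch X1 U1 \<alpha>1 I1 x1 \<sigma>1"
    and "bertrand_D_pair x (\<lambda>s. unit_normal X (\<alpha> s)) I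
                         x1 (\<lambda>s. unit_normal X1 (\<alpha>1 s)) I1 \<phi> lam"
    and "s \<in> I"
  shows "(deriv \<sigma> s + kg_ucurve X (\<alpha> s) * cos (\<sigma> s) + kg_vcurve X (\<alpha> s) * sin (\<sigma> s))
       - (deriv \<sigma>1 (\<phi> s) + kg_ucurve X1 (\<alpha>1 (\<phi> s)) * cos (\<sigma>1 (\<phi> s))
                           + kg_vcurve X1 (\<alpha>1 (\<phi> s)) * sin (\<sigma>1 (\<phi> s)))
       = lam * ((deriv \<sigma> s + kg_ucurve X (\<alpha> s) * cos (\<sigma> s) + kg_vcurve X (\<alpha> s) * sin (\<sigma> s))
              * (deriv \<sigma>1 (\<phi> s) + kg_ucurve X1 (\<alpha>1 (\<phi> s)) * cos (\<sigma>1 (\<phi> s))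
                                  + kg_vcurve X1 (\<alpha>1 (\<phi> s)) * sin (\<sigma>1 (\<phi> s)))
              - geodesic_torsion x (\<lambda>s. unit_normal X (\<alpha> s)) s
                * geodesic_torsion x1 (\<lambda>s. unit_normal X1 (\<alpha>1 s)) (\<phi> s))"
proof -
  note rp = assms(1) and op = assms(2) and rp1 = assms(3) and op1 = assms(4)
    and cp = assms(5) and cp1 = assms(6) and bp = assms(7) and s = assms(8)
  have s1: "\<phi> s \<in> I1"
    using bp s unfolding bertrand_D_pair_def by (meson bij_betwE)
  have curve: "open I" "norm (tangent x s) = 1" "tangent x differentiable (at s)"
    using cp s unfolding curve_on_patch_def by blast+
  have curve1: "open I1" "x1 differentiable (at (\<phi> s))" "norm (tangent x1 (\<phi> s)) = 1"
      "tangent x1 differentiable (at (\<phi> s))"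
    using cp1 s1 unfolding curve_on_patch_def by blast+
  from bertrand_D_pair_curvature_relation[OF bp curve(1) s curve1(1,2) curve(3) curve1(4)
      curve_on_patch_darboux_frame(4)[OF rp1 op1 cp1 s1]
      curve_on_patch_darboux_frame(3)[OF rp1 op1 cp1] curve(2)
      curve_on_patch_darboux_frame(2)[OF rp op cp s]
      curve_on_patch_darboux_frame(1)[OF rp1 op1 cp1 s1] curve1(3)
      curve_on_patch_darboux_frame(2)[OF rp1 op1 cp1 s1]]
  show ?thesis
    unfolding liouville_formula[OF rp op cp s] liouville_formula[OF rp1 op1 cp1 s1] .
qed

end
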